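(* Let $(G,\omega)$ be a weighted digraph without loops and let $V$ be its square-rooted weighted Hashimoto matrix. Then the radius of convergence $r$ of $\sum_{k=0}^\infty t^kp_k(A)$ equals $\rho(V)^{-1}$, where $\rho$ denotes spectral radius and $\rho(V)^{-1}:=\infty$ if $\rho(V)=0$.
   Context: A weighted digraph is a digraph $G=(V(G),E)$ (no loops or multiple edges) with a weight function $\omega:E\to(0,\infty)$. The weight of a walk $(e_1,\dots,e_k)$ (edges $e_r=(v_r,v_{r+1})$) is $\prod_r\omega(e_r)$; a walk is non-backtracking if $v_{r+2}\ne v_r$ for all $r$. $p_k(A)$ is the matrix whose $(i,j)$ entry is the sum of the weights of all non-backtracking walks of length $k$ from $i$ to $j$ ($p_0(A)=I$). $V$ is the $\#E\times\#E$ matrix indexed by edges with $V_{ef}=\sqrt{\omega(e)\omega(f)}$ if $e=(i,j)$, $f=(j,k)$ with $k\ne i$, and $V_{ef}=0$ otherwise. *)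

theory Defs
  imports "HOL-Analysis.Analysis" "Jordan_Normal_Form.Spectral_Radius"
begin

text \<open>A weighted digraph on the finite vertex type 'v: edge set E (a set of ordered
pairs, so no multiple edges) and weight function w, positive on E.\<close>

definition weighted_digraph :: "('v \<times> 'v) set \<Rightarrow> ('v \<times> 'v \<Rightarrow> real) \<Rightarrow> bool" where
  "weighted_digraph E w \<longleftrightarrow> (\<forall>i. (i, i) \<notin> E) \<and> (\<forall>e\<in>E. w e > 0)"

definition nb_walks :: "('v \<times> 'v) set \<Rightarrow> nat \<Rightarrow> 'v \<Rightarrow> 'v \<Rightarrow> 'v list set" where
  "nb_walks E k i j = {vs. length vs = Suc k \<and> vs ! 0 = i \<and> vs ! k = j
      \<and> (\<forall>r<k. (vs ! r, vs ! Suc r) \<in> E)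
      \<and> (\<forall>r. r + 2 \<le> k \<longrightarrow> vs ! (r + 2) \<noteq> vs ! r)}"

definition walk_weight :: "('v \<times> 'v \<Rightarrow> real) \<Rightarrow> 'v list \<Rightarrow> real" where
  "walk_weight w vs = (\<Prod>r<length vs - 1. w (vs ! r, vs ! Suc r))"

definition nb_matrix :: "('v \<times> 'v) set \<Rightarrow> ('v \<times> 'v \<Rightarrow> real) \<Rightarrow> nat \<Rightarrow> real ^ 'v ^ 'v" where
  "nb_matrix E w k = (\<chi> i j. \<Sum>vs\<in>nb_walks E k i j. walk_weight w vs)"

definition hashimoto_entry :: "('v \<times> 'v \<Rightarrow> real) \<Rightarrow> ('v \<times> 'v) \<Rightarrow> ('v \<times> 'v) \<Rightarrow> real" where
  "hashimoto_entry w e f =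
     (if snd e = fst f \<and> snd f \<noteq> fst e then sqrt (w e * w f) else 0)"

definition edge_list :: "('v \<times> 'v) set \<Rightarrow> ('v \<times> 'v) list" where
  "edge_list E = (SOME es. distinct es \<and> set es = E)"

definition hashimoto_mat :: "('v \<times> 'v) set \<Rightarrow> ('v \<times> 'v \<Rightarrow> real) \<Rightarrow> complex mat" where
  "hashimoto_mat E w =
     Matrix.mat (card E) (card E)
       (\<lambda>(a, b). complex_of_real (hashimoto_entry w (edge_list E ! a) (edge_list E ! b)))"

definition spec_rad :: "complex mat \<Rightarrow> real" where
  "spec_rad M = (if dim_row M = 0 then 0 else spectral_radius M)"

end

theory Submission
  imports Defs
begin

text \<open>A non-backtracking walk with \<open>k + 1\<close> edges is a sequence of edges \<open>e\<^sub>0, \<dots>, e\<^sub>k\<close>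
  in which each consecutive pair is a non-backtracking turn. Writing the weight of each edge as
  \<open>\<surd>\<omega>(e) \<cdot> \<surd>\<omega>(e)\<close> and pairing the square roots of consecutive edges gives
  \<open>p\<^sub>k\<^sub>+\<^sub>1(A)\<^sub>i\<^sub>j = \<Sum> \<surd>\<omega>(g) (V\<^sup>k)\<^sub>g\<^sub>f \<surd>\<omega>(f)\<close>, summed over edges \<open>g\<close> leaving \<open>i\<close>
  and \<open>f\<close> entering \<open>j\<close>. All terms are nonnegative, so up to constants the entries of
  \<open>p\<^sub>k\<^sub>+\<^sub>1(A)\<close> are bounded above by the largest entry of \<open>V\<^sup>k\<close> and, for suitable \<open>i, j\<close>,
  below by it. The entries of \<open>V\<^sup>k\<close> are \<open>O(r\<^sup>k)\<close> for every \<open>r > \<rho>(V)\<close> (Jordan normal form),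
  while some entry is at least \<open>\<rho>(V)\<^sup>k / #E\<close> (an eigenvector for an eigenvalue of maximal
  modulus). Hence \<open>limsup \<parallel>p\<^sub>n(A)\<parallel>\<^bsup>1/n\<^esup> = \<rho>(V)\<close>, and Cauchy--Hadamard gives the radius.\<close>

text \<open>The Jordan normal form library also writes \<open>$\<close> for indexing its vectors; here \<open>$\<close>
  only indexes the Cartesian vectors in which \<open>nb_matrix\<close> lives.\<close>

no_notation vec_index (infixl \<open>$\<close> 100)

section \<open>Exponential growth and the radius of convergence\<close>

lemma limsup_root_le_of_bound:
  assumes "0 < D" and "0 \<le> r" and bound: "\<And>n. n \<ge> 1 \<Longrightarrow> x n \<le> D * r ^ n"
  shows "limsup (\<lambda>n. ereal (root n (x n))) \<le> ereal r"
proof -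
  have "\<forall>\<^sub>F n in sequentially. ereal (root n (x n)) \<le> ereal (root n D * r)"
    using eventually_ge_at_top[of 1]
  proof eventually_elim
    case (elim n)
    then have "root n (x n) \<le> root n (D * r ^ n)" by (intro real_root_le_mono bound) auto
    with elim \<open>0 \<le> r\<close> show ?case by (simp add: real_root_mult real_root_power_cancel)
  qed
  then have "limsup (\<lambda>n. ereal (root n (x n))) \<le> limsup (\<lambda>n. ereal (root n D * r))"
    by (rule Limsup_mono)
  also have "\<dots> = ereal r"
    using LIMSEQ_root_const[OF \<open>0 < D\<close>]
    by (intro lim_imp_Limsup) (auto intro!: tendsto_eq_intros)
  finally show ?thesis .
qed

lemma limsup_root_ge_of_bound:
  assumes "0 < c" and "0 \<le> r" and bound: "\<And>n. n \<ge> 1 \<Longrightarrow> c * r ^ n \<le> x n"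
  shows "ereal r \<le> limsup (\<lambda>n. ereal (root n (x n)))"
proof -
  have "\<forall>\<^sub>F n in sequentially. ereal (root n c * r) \<le> ereal (root n (x n))"
    using eventually_ge_at_top[of 1]
  proof eventually_elim
    case (elim n)
    then have "root n (c * r ^ n) \<le> root n (x n)" by (intro real_root_le_mono bound) auto
    with elim \<open>0 \<le> r\<close> show ?case by (simp add: real_root_mult real_root_power_cancel)
  qed
  then have "limsup (\<lambda>n. ereal (root n c * r)) \<le> limsup (\<lambda>n. ereal (root n (x n)))"
    by (rule Limsup_mono)
  moreover have "limsup (\<lambda>n. ereal (root n c * r)) = ereal r"
    using LIMSEQ_root_const[OF \<open>0 < c\<close>]
    by (intro lim_imp_Limsup) (auto intro!: tendsto_eq_intros)
  ultimately show ?thesis by simp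
qed

lemma conv_radius_eq_inverse_of_growth:
  fixes f :: "nat \<Rightarrow> 'a::banach"
  assumes "0 \<le> \<rho>"
    and upper: "\<And>r. \<rho> < r \<Longrightarrow> \<exists>D>0. \<forall>n\<ge>1. norm (f n) \<le> D * r ^ n"
    and lower: "0 < \<rho> \<Longrightarrow> \<exists>c>0. \<forall>n\<ge>1. c * \<rho> ^ n \<le> norm (f n)"
  shows "conv_radius f = inverse (ereal \<rho>)"
proof -
  let ?a = "\<lambda>n. ereal (root n (norm (f n)))"
  have "limsup ?a \<le> ereal \<rho>"
  proof (rule ereal_le_epsilon2)
    fix \<epsilon> :: real assume "0 < \<epsilon>"
    with upper[of "\<rho> + \<epsilon>"] obtain D where "0 < D" "\<And>n. n \<ge> 1 \<Longrightarrow> norm (f n) \<le> D * (\<rho> + \<epsilon>) ^ n"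
      by auto
    with \<open>0 \<le> \<rho>\<close> \<open>0 < \<epsilon>\<close> have "limsup ?a \<le> ereal (\<rho> + \<epsilon>)"
      by (intro limsup_root_le_of_bound[where D = D]) auto
    then show "limsup ?a \<le> ereal \<rho> + ereal \<epsilon>" by simp
  qed
  moreover have "ereal \<rho> \<le> limsup ?a"
  proof (cases "\<rho> = 0")
    case True
    then show ?thesis by (intro limsup_root_ge_of_bound[of 1]) (auto simp: power_0_left)
  next
    case False
    with \<open>0 \<le> \<rho>\<close> lower obtain c where "0 < c" "\<And>n. n \<ge> 1 \<Longrightarrow> c * \<rho> ^ n \<le> norm (f n)" by auto
    with \<open>0 \<le> \<rho>\<close> show ?thesis by (intro limsup_root_ge_of_bound)
  qed
  ultimately show ?thesis by (simp add: conv_radius_def)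
qed

lemma norm_le_sum_abs_entries: "norm (x :: real ^ 'n ^ 'm) \<le> (\<Sum>i\<in>UNIV. \<Sum>j\<in>UNIV. \<bar>x $ i $ j\<bar>)"
proof -
  have "norm x \<le> (\<Sum>i\<in>UNIV. norm (x $ i))" by (simp add: norm_vec_def L2_set_le_sum)
  also have "\<dots> \<le> (\<Sum>i\<in>UNIV. \<Sum>j\<in>UNIV. \<bar>x $ i $ j\<bar>)"
    by (intro sum_mono) (simp add: norm_le_l1_cart)
  finally show ?thesis .
qed

lemma abs_entry_le_norm: "\<bar>(x :: real ^ 'n ^ 'm) $ i $ j\<bar> \<le> norm x"
  using component_le_norm_cart[of "x $ i" j] Finite_Cartesian_Product.norm_nth_le[of x i] by linarith

section \<open>Powers of a complex matrix and its spectral radius\<close>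

lemma ex_argmax_lessThan:
  fixes f :: "nat \<Rightarrow> 'a::linorder"
  assumes "0 < n"
  shows "\<exists>i<n. \<forall>j<n. f j \<le> f i"
proof -
  have "Max (f ` {..<n}) \<in> f ` {..<n}" using assms by (intro Max_in) auto
  then obtain i where "i < n" "f i = Max (f ` {..<n})" by auto
  then show ?thesis by (metis Max_ge finite_imageI finite_lessThan image_eqI lessThan_iff)
qed

lemma eigenvector_smult_mat:
  assumes "A \<in> carrier_mat n n" and "eigenvector A v \<mu>"
  shows "eigenvector (c \<cdot>\<^sub>m A) v (c * \<mu>)"
proof -
  have "v \<in> carrier_vec n" using assms by (simp add: eigenvector_def)
  then have "(c \<cdot>\<^sub>m A) *\<^sub>v v = c \<cdot>\<^sub>v (A *\<^sub>v v)"
    using assms(1) by (intro eq_vecI) (auto simp: scalar_prod_def sum_distrib_left mult.assoc)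
  with assms show ?thesis by (simp add: eigenvector_def smult_smult_assoc)
qed

lemma pow_mat_smult:
  assumes "A \<in> carrier_mat n n"
  shows "(c \<cdot>\<^sub>m A) ^\<^sub>m k = (c :: 'a :: comm_ring_1) ^ k \<cdot>\<^sub>m A ^\<^sub>m k"
proof (induction k)
  case (Suc k)
  then show ?case
    using assms by (intro eq_matI) (auto simp: scalar_prod_def sum_distrib_left mult_ac)
qed (intro eq_matI, auto)

lemma spectral_radius_nonneg:
  assumes "A \<in> carrier_mat n n" and "0 < n"
  shows "0 \<le> spectral_radius A"
  using spectral_radius_mem_max(1)[OF assms] by auto

text \<open>Rescaling by \<open>r\<close> reduces this to the bounded case \<open>spectral_radius A < 1\<close>, which is
  settled by the Jordan normal form.\<close>

lemma spectral_radius_pow_norm_bound: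
  fixes A :: "complex mat"
  assumes A: "A \<in> carrier_mat n n" and n: "0 < n" and r: "spectral_radius A < r"
  shows "\<exists>C. \<forall>k. norm_bound (A ^\<^sub>m k) (C * r ^ k)"
proof -
  have r0: "0 < r" using spectral_radius_nonneg[OF A n] r by linarith
  define B where "B = complex_of_real (1 / r) \<cdot>\<^sub>m A"
  have B: "B \<in> carrier_mat n n" using A by (simp add: B_def)
  have A_eq: "A = complex_of_real r \<cdot>\<^sub>m B"
    using A r0 by (intro eq_matI) (auto simp: B_def)
  have "spectral_radius B < 1"
  proof -
    obtain \<mu> where \<mu>: "\<mu> \<in> spectrum B" and eq: "spectral_radius B = norm \<mu>"
      using spectral_radius_mem_max(1)[OF B n] by auto
    then obtain v where "eigenvector B v \<mu>" by (auto simp: spectrum_def eigenvalue_def)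
    then have "eigenvector A v (complex_of_real r * \<mu>)"
      unfolding A_eq by (rule eigenvector_smult_mat[OF B])
    then have "complex_of_real r * \<mu> \<in> spectrum A" by (auto simp: spectrum_def eigenvalue_def)
    then have "norm (complex_of_real r * \<mu>) \<le> spectral_radius A"
      by (intro spectral_radius_mem_max(2)[OF A n] imageI)
    with r0 have "r * norm \<mu> \<le> spectral_radius A" by (simp add: norm_mult)
    with r have "r * norm \<mu> < r * 1" by linarith
    with r0 eq show ?thesis by (simp only: mult_less_cancel_left_pos)
  qed
  then obtain C where C: "\<And>k. norm_bound (B ^\<^sub>m k) C"
    using spectral_radius_jnf_norm_bound_less_1_upper_triangular[OF B] by auto
  have "norm_bound (A ^\<^sub>m k) (C * r ^ k)" for k
  proof
    fix i j assume "i < dim_row (A ^\<^sub>m k)" "j < dim_col (A ^\<^sub>m k)"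
    then have ij: "i < n" "j < n" using A by (auto split: if_splits)
    have "norm ((A ^\<^sub>m k) $$ (i, j)) = r ^ k * norm ((B ^\<^sub>m k) $$ (i, j))"
      unfolding A_eq pow_mat_smult[OF B] using ij B r0
      by (simp add: norm_mult norm_power)
    also have "\<dots> \<le> r ^ k * C"
      using C[of k] ij B r0 by (intro mult_left_mono) (auto simp: norm_bound_def)
    finally show "norm ((A ^\<^sub>m k) $$ (i, j)) \<le> C * r ^ k" by (simp add: mult.commute)
  qed
  then show ?thesis by blast
qed

text \<open>Apply \<open>A ^ k\<close> to an eigenvector for an eigenvalue of maximal modulus and look at a
  coordinate of maximal modulus.\<close>

lemma spectral_radius_pow_le_entry:
  fixes A :: "complex mat"
  assumes A: "A \<in> carrier_mat n n" and n: "0 < n"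
  shows "\<exists>i<n. \<exists>j<n. spectral_radius A ^ k \<le> real n * norm ((A ^\<^sub>m k) $$ (i, j))"
proof -
  obtain \<mu> where "\<mu> \<in> spectrum A" and eq: "spectral_radius A = norm \<mu>"
    using spectral_radius_mem_max(1)[OF A n] by auto
  then obtain v where ev: "eigenvector A v \<mu>" by (auto simp: spectrum_def eigenvalue_def)
  then have v: "v \<in> carrier_vec n" "v \<noteq> 0\<^sub>v n" using A by (auto simp: eigenvector_def)
  obtain i where i: "i < n" and i_max: "\<And>l. l < n \<Longrightarrow> norm (vec_index v l) \<le> norm (vec_index v i)"
    using ex_argmax_lessThan[OF n, of "\<lambda>l. norm (vec_index v l)"] by blast
  obtain j where j: "j < n" and j_max: "\<And>l. l < n \<Longrightarrow> norm ((A ^\<^sub>m k) $$ (i, l)) \<le> norm ((A ^\<^sub>m k) $$ (i, j))"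
    using ex_argmax_lessThan[OF n, of "\<lambda>l. norm ((A ^\<^sub>m k) $$ (i, l))"] by blast
  have "0 < norm (vec_index v i)"
  proof (rule ccontr)
    assume "\<not> 0 < norm (vec_index v i)"
    then have "vec_index v l = 0" if "l < n" for l
      using i_max[OF that] by (meson norm_le_zero_iff order_trans not_less)
    then have "v = 0\<^sub>v n" using v(1) by (intro eq_vecI) auto
    with v(2) show False ..
  qed
  have "\<mu> ^ k * vec_index v i = vec_index (A ^\<^sub>m k *\<^sub>v v) i"
    using eigenvector_pow[OF A ev] i v by simp
  also have "\<dots> = (\<Sum>l<n. (A ^\<^sub>m k) $$ (i, l) * vec_index v l)"
    using i v A by (simp add: scalar_prod_def lessThan_atLeast0)
  finally have "norm \<mu> ^ k * norm (vec_index v i) = norm (\<Sum>l<n. (A ^\<^sub>m k) $$ (i, l) * vec_index v l)"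
    by (metis norm_mult norm_power)
  also have "\<dots> \<le> (\<Sum>l<n. norm ((A ^\<^sub>m k) $$ (i, j)) * norm (vec_index v i))"
    by (intro order_trans[OF norm_sum] sum_mono)
      (auto simp: norm_mult intro!: mult_mono j_max i_max)
  also have "\<dots> = real n * norm ((A ^\<^sub>m k) $$ (i, j)) * norm (vec_index v i)" by simp
  finally show ?thesis using i j eq \<open>0 < norm (vec_index v i)\<close> by auto
qed

lemma spec_rad_nonneg: "A \<in> carrier_mat n n \<Longrightarrow> 0 \<le> spec_rad A"
  by (simp add: spec_rad_def spectral_radius_nonneg)

lemma spec_rad_eq_spectral_radius: "A \<in> carrier_mat n n \<Longrightarrow> 0 < n \<Longrightarrow> spec_rad A = spectral_radius A"
  by (simp add: spec_rad_def)

section \<open>Non-backtracking walks by their last edge\<close>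

lemma finite_nb_walks:
  fixes E :: "('v::finite \<times> 'v) set"
  shows "finite (nb_walks E k i j)"
proof (rule finite_subset)
  show "nb_walks E k i j \<subseteq> {vs. set vs \<subseteq> UNIV \<and> length vs = Suc k}"
    by (auto simp: nb_walks_def)
qed (rule finite_lists_length_eq, simp)

lemma nb_walks_Suc_0: "nb_walks E (Suc 0) i j = (if (i, j) \<in> E then {[i, j]} else {})"
proof -
  have "vs \<in> nb_walks E (Suc 0) i j \<longleftrightarrow> vs = [i, j] \<and> (i, j) \<in> E" for vs
    by (auto simp: nb_walks_def length_Suc_conv)
  then show ?thesis by auto
qed

lemma nb_walks_snoc_iff:
  assumes "length vs = Suc (Suc k)"
  shows "vs @ [d] \<in> nb_walks E (Suc (Suc k)) i j \<longleftrightarrow>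
    d = j \<and> vs \<in> nb_walks E (Suc k) i (vs ! Suc k) \<and> (vs ! Suc k, d) \<in> E \<and> vs ! k \<noteq> d"
proof -
  have edges: "(\<forall>r<Suc n. P r) \<longleftrightarrow> (\<forall>r<n. P r) \<and> P n" for n and P :: "nat \<Rightarrow> bool"
    by (auto simp: less_Suc_eq)
  have turns: "(\<forall>r. r + 2 \<le> Suc (Suc k) \<longrightarrow> P r) \<longleftrightarrow> (\<forall>r. r + 2 \<le> Suc k \<longrightarrow> P r) \<and> P k"
    for P :: "nat \<Rightarrow> bool"
    by (auto simp: le_Suc_eq)
  show ?thesis
    unfolding nb_walks_def mem_Collect_eq edges[of "Suc k"] turns using assms
    by (simp add: nth_append) (auto simp: nth_append)
qed

lemma walk_weight_snoc:
  assumes "vs \<noteq> []"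
  shows "walk_weight w (vs @ [d]) = walk_weight w vs * w (last vs, d)"
proof -
  obtain n where n: "length vs = Suc n" using assms by (cases vs) auto
  have "walk_weight w (vs @ [d]) = (\<Prod>r<Suc n. w ((vs @ [d]) ! r, (vs @ [d]) ! Suc r))"
    using n by (simp add: walk_weight_def)
  also have "\<dots> = (\<Prod>r<n. w (vs ! r, vs ! Suc r)) * w (vs ! n, d)"
    using n by (simp add: nth_append)
  finally show ?thesis using n assms by (simp add: walk_weight_def last_conv_nth)
qed

text \<open>The walks counted here have \<open>k + 1\<close> edges, so that \<open>k\<close> matches the power of \<open>V\<close> in
  \<open>nb_ending_weight_eq_hashimoto_pow\<close>.\<close>

definition nb_ending_weight ::
    "('v \<times> 'v) set \<Rightarrow> ('v \<times> 'v \<Rightarrow> real) \<Rightarrow> nat \<Rightarrow> 'v \<Rightarrow> 'v \<times> 'v \<Rightarrow> real" where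
  "nb_ending_weight E w k i f =
     (\<Sum>vs\<in>{vs \<in> nb_walks E (Suc k) i (snd f). vs ! k = fst f}. walk_weight w vs)"

lemma sum_nb_walks_by_last_edge:
  fixes E :: "('v::finite \<times> 'v) set"
  shows "(\<Sum>vs\<in>{vs \<in> nb_walks E (Suc k) i j. P (vs ! k)}. walk_weight w vs)
       = (\<Sum>f\<in>{f \<in> E. snd f = j \<and> P (fst f)}. nb_ending_weight E w k i f)"
proof -
  let ?S = "{vs \<in> nb_walks E (Suc k) i j. P (vs ! k)}"
  have last_edge: "(vs ! k, j) \<in> E" if "vs \<in> nb_walks E (Suc k) i j" for vs
    using that by (auto simp: nb_walks_def)
  have "(\<Sum>vs\<in>?S. walk_weight w vs)
      = (\<Sum>f\<in>{f \<in> E. snd f = j \<and> P (fst f)}. \<Sum>vs\<in>{vs \<in> ?S. (vs ! k, j) = f}. walk_weight w vs)"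
    by (rule sum.group [symmetric]) (auto simp: finite_nb_walks last_edge)
  also have "\<dots> = (\<Sum>f\<in>{f \<in> E. snd f = j \<and> P (fst f)}. nb_ending_weight E w k i f)"
    unfolding nb_ending_weight_def
    by (intro sum.cong refl arg_cong[where f = "\<lambda>S. sum _ S"]) auto
  finally show ?thesis .
qed

lemma nb_ending_weight_0: "nb_ending_weight E w 0 i f = (if f \<in> E \<and> fst f = i then w f else 0)"
proof (cases f)
  case (Pair c d)
  then have walks: "{vs \<in> nb_walks E (Suc 0) i (snd f). vs ! 0 = fst f}
      = (if f \<in> E \<and> fst f = i then {[i, d]} else {})"
    by (auto simp: nb_walks_Suc_0)
  show ?thesis
    unfolding nb_ending_weight_def One_nat_def walks using Pair by (auto simp: walk_weight_def)
qed

lemma nb_ending_weight_Suc: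
  fixes E :: "('v::finite \<times> 'v) set"
  shows "nb_ending_weight E w (Suc k) i f = (if f \<in> E
     then w f * (\<Sum>g\<in>{g \<in> E. snd g = fst f \<and> fst g \<noteq> snd f}. nb_ending_weight E w k i g)
     else 0)"
proof -
  obtain c d where f: "f = (c, d)" by force
  let ?B = "{vs \<in> nb_walks E (Suc k) i c. vs ! k \<noteq> d}"
  have walks: "{vs \<in> nb_walks E (Suc (Suc k)) i d. vs ! Suc k = c}
      = (\<lambda>vs. vs @ [d]) ` {vs \<in> ?B. (c, d) \<in> E}"
  proof (intro Set.set_eqI iffI)
    fix x assume x: "x \<in> {vs \<in> nb_walks E (Suc (Suc k)) i d. vs ! Suc k = c}"
    then have "x \<noteq> []" by (auto simp: nb_walks_def)
    then obtain vs y where xs: "x = vs @ [y]" by (cases x rule: rev_cases) auto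
    with x have "length vs = Suc (Suc k)" "vs ! Suc k = c"
      by (auto simp: nb_walks_def nth_append)
    with x xs show "x \<in> (\<lambda>vs. vs @ [d]) ` {vs \<in> ?B. (c, d) \<in> E}"
      using nb_walks_snoc_iff[of vs k y E i d] by auto
  next
    fix x assume "x \<in> (\<lambda>vs. vs @ [d]) ` {vs \<in> ?B. (c, d) \<in> E}"
    then obtain vs where x: "x = vs @ [d]" and vs: "vs \<in> ?B" and cd: "(c, d) \<in> E" by blast
    have "length vs = Suc (Suc k)" "vs ! Suc k = c" using vs by (auto simp: nb_walks_def)
    with vs cd show "x \<in> {vs \<in> nb_walks E (Suc (Suc k)) i d. vs ! Suc k = c}"
      unfolding x using nb_walks_snoc_iff[of vs k d E i d] by (simp add: nth_append)
  qed
  have snoc_weight: "walk_weight w (vs @ [d]) = walk_weight w vs * w (c, d)" if "vs \<in> ?B" for vs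
  proof -
    have "length vs = Suc (Suc k)" "vs ! Suc k = c" using that by (auto simp: nb_walks_def)
    moreover from this have "vs \<noteq> []" by auto
    ultimately show ?thesis by (simp add: walk_weight_snoc last_conv_nth)
  qed
  have "nb_ending_weight E w (Suc k) i f = (\<Sum>vs\<in>{vs \<in> ?B. (c, d) \<in> E}. walk_weight w (vs @ [d]))"
    unfolding nb_ending_weight_def f by (simp add: walks sum.reindex inj_on_def)
  also have "\<dots> = (if (c, d) \<in> E then (\<Sum>vs\<in>?B. walk_weight w vs) * w (c, d) else 0)"
    by (simp add: snoc_weight sum_distrib_right)
  also have "(\<Sum>vs\<in>?B. walk_weight w vs) = (\<Sum>g\<in>{g \<in> E. snd g = c \<and> fst g \<noteq> d}. nb_ending_weight E w k i g)"
    by (rule sum_nb_walks_by_last_edge)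
  finally show ?thesis by (simp add: f mult.commute)
qed

section \<open>The weighted Hashimoto matrix\<close>

text \<open>\<open>(V\<^sup>k)\<^sub>e\<^sub>f\<close>, indexed by the edges themselves rather than by their positions in
  \<open>edge_list E\<close>.\<close>

fun hashimoto_pow :: "('v \<times> 'v) set \<Rightarrow> ('v \<times> 'v \<Rightarrow> real) \<Rightarrow> nat \<Rightarrow> 'v \<times> 'v \<Rightarrow> 'v \<times> 'v \<Rightarrow> real"
  where
    "hashimoto_pow E w 0 e f = (if e = f then 1 else 0)"
  | "hashimoto_pow E w (Suc k) e f = (\<Sum>g\<in>E. hashimoto_pow E w k e g * hashimoto_entry w g f)"

lemma weighted_digraph_pos: "weighted_digraph E w \<Longrightarrow> e \<in> E \<Longrightarrow> 0 < w e"
  by (simp add: weighted_digraph_def)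

lemma hashimoto_pow_nonneg:
  assumes "weighted_digraph E w" and "f \<in> E"
  shows "0 \<le> hashimoto_pow E w k e f"
  using assms(2)
proof (induction k arbitrary: f)
  case (Suc k)
  have "0 \<le> hashimoto_pow E w k e g * hashimoto_entry w g f" if "g \<in> E" for g
    using Suc.IH[OF that] weighted_digraph_pos[OF assms(1) that]
      weighted_digraph_pos[OF assms(1) Suc.prems]
    by (simp add: hashimoto_entry_def)
  then show ?case by (simp add: sum_nonneg)
qed simp

lemma hashimoto_pow_Suc_right_sum:
  "(\<Sum>g\<in>G. c g * hashimoto_pow E w (Suc k) g f)
     = (\<Sum>h\<in>E. (\<Sum>g\<in>G. c g * hashimoto_pow E w k g h) * hashimoto_entry w h f)"
  by (simp add: sum_distrib_left sum_distrib_right mult.assoc sum.swap[of _ G])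

lemma nb_ending_weight_eq_hashimoto_pow:
  fixes E :: "('v::finite \<times> 'v) set"
  assumes wd: "weighted_digraph E w" and "f \<in> E"
  shows "nb_ending_weight E w k i f
    = sqrt (w f) * (\<Sum>g\<in>{g \<in> E. fst g = i}. sqrt (w g) * hashimoto_pow E w k g f)"
  using assms(2)
proof (induction k arbitrary: f)
  case 0
  have "(\<Sum>g\<in>{g \<in> E. fst g = i}. sqrt (w g) * hashimoto_pow E w 0 g f)
      = (\<Sum>g\<in>{g \<in> E. fst g = i}. if g = f then sqrt (w f) else 0)"
    by (rule sum.cong) auto
  then show ?case
    using 0 weighted_digraph_pos[OF wd 0] by (simp add: nb_ending_weight_0)
next
  case (Suc k)
  define start where "start h = (\<Sum>g\<in>{g \<in> E. fst g = i}. sqrt (w g) * hashimoto_pow E w k g h)" for h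
  let ?turn = "\<lambda>h. snd h = fst f \<and> fst h \<noteq> snd f"
  have entry: "sqrt (w f) * hashimoto_entry w h f = (if ?turn h then w f * sqrt (w h) else 0)" for h
    using weighted_digraph_pos[OF wd Suc.prems]
    by (auto simp: hashimoto_entry_def real_sqrt_mult)
  have "sqrt (w f) * (\<Sum>g\<in>{g \<in> E. fst g = i}. sqrt (w g) * hashimoto_pow E w (Suc k) g f)
      = (\<Sum>h\<in>E. start h * (sqrt (w f) * hashimoto_entry w h f))"
    unfolding hashimoto_pow_Suc_right_sum start_def by (simp add: sum_distrib_left mult_ac)
  also have "\<dots> = (\<Sum>h\<in>E. if ?turn h then w f * (sqrt (w h) * start h) else 0)"
    by (intro sum.cong) (simp_all add: entry)
  also have "\<dots> = w f * (\<Sum>h\<in>{h \<in> E. ?turn h}. sqrt (w h) * start h)"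
    by (auto simp: sum.inter_filter sum_distrib_left intro!: sum.cong)
  also have "\<dots> = nb_ending_weight E w (Suc k) i f"
    using Suc by (simp add: nb_ending_weight_Suc start_def)
  finally show ?case ..
qed

lemma nb_matrix_Suc_eq_hashimoto_pow:
  fixes E :: "('v::finite \<times> 'v) set"
  assumes "weighted_digraph E w"
  shows "nb_matrix E w (Suc k) $ i $ j = (\<Sum>f\<in>{f \<in> E. snd f = j}. \<Sum>g\<in>{g \<in> E. fst g = i}.
     sqrt (w g) * hashimoto_pow E w k g f * sqrt (w f))"
proof -
  have "nb_matrix E w (Suc k) $ i $ j = (\<Sum>f\<in>{f \<in> E. snd f = j}. nb_ending_weight E w k i f)"
    using sum_nb_walks_by_last_edge[where P = "\<lambda>_. True"] by (simp add: nb_matrix_def)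
  also have "\<dots> = (\<Sum>f\<in>{f \<in> E. snd f = j}. \<Sum>g\<in>{g \<in> E. fst g = i}.
     sqrt (w g) * hashimoto_pow E w k g f * sqrt (w f))"
    using assms by (simp add: nb_ending_weight_eq_hashimoto_pow sum_distrib_left mult_ac)
  finally show ?thesis .
qed

lemma edge_list:
  assumes "finite E"
  shows "distinct (edge_list E)" and "set (edge_list E) = E" and "length (edge_list E) = card E"
proof -
  have "\<exists>es. distinct es \<and> set es = E" using finite_distinct_list[OF assms] by blast
  then have "distinct (edge_list E) \<and> set (edge_list E) = E"
    unfolding edge_list_def by (rule someI_ex)
  then show "distinct (edge_list E)" and "set (edge_list E) = E" and "length (edge_list E) = card E"
    using distinct_card by fastforce+
qed

lemma ex_edge_list_index:
  assumes "finite E" and "e \<in> E"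
  shows "\<exists>a<card E. e = edge_list E ! a"
  using assms edge_list[OF assms(1)] by (metis in_set_conv_nth)

lemma hashimoto_mat_carrier: "hashimoto_mat E w \<in> carrier_mat (card E) (card E)"
  by (simp add: hashimoto_mat_def)

lemma sum_set_distinct_nth: "distinct xs \<Longrightarrow> (\<Sum>x\<in>set xs. f x) = (\<Sum>i<length xs. f (xs ! i))"
  by (simp add: sum.distinct_set_conv_list sum_list_sum_nth atLeast0LessThan)

lemma hashimoto_mat_pow_entry:
  assumes "finite E" and "a < card E" and "b < card E"
  shows "(hashimoto_mat E w ^\<^sub>m k) $$ (a, b)
    = complex_of_real (hashimoto_pow E w k (edge_list E ! a) (edge_list E ! b))"
  using assms(3)
proof (induction k arbitrary: b)
  case 0
  then show ?case
    using assms edge_list[OF assms(1)] hashimoto_mat_carrier[of E w]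
    by (simp add: nth_eq_iff_index_eq)
next
  case (Suc k)
  let ?es = "edge_list E"
  let ?F = "\<lambda>g. hashimoto_pow E w k (?es ! a) g * hashimoto_entry w g (?es ! b)"
  have "(hashimoto_mat E w ^\<^sub>m Suc k) $$ (a, b)
      = (\<Sum>l<card E. (hashimoto_mat E w ^\<^sub>m k) $$ (a, l) * hashimoto_mat E w $$ (l, b))"
    using Suc.prems assms(2) hashimoto_mat_carrier[of E w]
    by (simp add: scalar_prod_def atLeast0LessThan)
  also have "\<dots> = complex_of_real (\<Sum>l<length ?es. ?F (?es ! l))"
    using Suc edge_list(3)[OF assms(1)] by (simp add: hashimoto_mat_def)
  also have "(\<Sum>l<length ?es. ?F (?es ! l)) = (\<Sum>g\<in>set ?es. ?F g)"
    by (rule sum_set_distinct_nth[symmetric]) (rule edge_list(1)[OF assms(1)])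
  also have "\<dots> = hashimoto_pow E w (Suc k) (?es ! a) (?es ! b)"
    by (simp only: hashimoto_pow.simps edge_list(2)[OF assms(1)])
  finally show ?case .
qed

lemma hashimoto_pow_upper_bound:
  assumes "finite E" and "spec_rad (hashimoto_mat E w) < r"
  shows "\<exists>C\<ge>0. \<forall>k. \<forall>g\<in>E. \<forall>f\<in>E. \<bar>hashimoto_pow E w k g f\<bar> \<le> C * r ^ k"
proof (cases "E = {}")
  case False
  then have n: "0 < card E" using assms(1) by (simp add: card_gt_0_iff)
  moreover have "spectral_radius (hashimoto_mat E w) < r"
    using assms(2) spec_rad_eq_spectral_radius[OF hashimoto_mat_carrier n] by simp
  ultimately obtain C where C: "\<And>k. norm_bound (hashimoto_mat E w ^\<^sub>m k) (C * r ^ k)"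
    using spectral_radius_pow_norm_bound[OF hashimoto_mat_carrier] by blast
  have bound: "\<bar>hashimoto_pow E w k g f\<bar> \<le> C * r ^ k" if gE: "g \<in> E" and fE: "f \<in> E" for k g f
  proof -
    obtain a b where a: "a < card E" "g = edge_list E ! a" and b: "b < card E" "f = edge_list E ! b"
      using ex_edge_list_index[OF assms(1) gE] ex_edge_list_index[OF assms(1) fE] by blast
    have "\<bar>hashimoto_pow E w k g f\<bar> = norm ((hashimoto_mat E w ^\<^sub>m k) $$ (a, b))"
      using hashimoto_mat_pow_entry[OF assms(1) a(1) b(1)] a b by simp
    also have "\<dots> \<le> C * r ^ k"
      using C[of k] a b carrier_matD[OF hashimoto_mat_carrier, of E w]
      by (simp add: norm_bound_def)
    finally show ?thesis .
  qed
  moreover obtain g where "g \<in> E" using False by blast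
  from bound[OF this this, of 0] have "0 \<le> C" by simp
  ultimately show ?thesis by blast
qed (rule exI[of _ 0], simp)

lemma hashimoto_pow_lower_bound:
  assumes "finite E" and "E \<noteq> {}"
  shows "\<exists>g\<in>E. \<exists>f\<in>E. spec_rad (hashimoto_mat E w) ^ k \<le> card E * \<bar>hashimoto_pow E w k g f\<bar>"
proof -
  have n: "0 < card E" using assms by (simp add: card_gt_0_iff)
  obtain a b where ab: "a < card E" "b < card E" and
    "spectral_radius (hashimoto_mat E w) ^ k \<le> card E * norm ((hashimoto_mat E w ^\<^sub>m k) $$ (a, b))"
    using spectral_radius_pow_le_entry[OF hashimoto_mat_carrier n] by blast
  moreover have "edge_list E ! a \<in> E" "edge_list E ! b \<in> E"
    using ab edge_list[OF assms(1)] by (metis nth_mem)+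
  ultimately show ?thesis
    using hashimoto_mat_pow_entry[OF assms(1) ab] spec_rad_eq_spectral_radius[OF hashimoto_mat_carrier n]
    by auto
qed

section \<open>Growth of \<open>p\<^sub>n(A)\<close>\<close>

lemma abs_nb_matrix_Suc_le:
  fixes E :: "('v::finite \<times> 'v) set"
  assumes wd: "weighted_digraph E w" and "0 \<le> B"
    and bound: "\<And>g f. g \<in> E \<Longrightarrow> f \<in> E \<Longrightarrow> \<bar>hashimoto_pow E w k g f\<bar> \<le> B"
  shows "\<bar>nb_matrix E w (Suc k) $ i $ j\<bar> \<le> (\<Sum>e\<in>E. sqrt (w e))\<^sup>2 * B"
proof -
  let ?s = "\<lambda>e. sqrt (w e)" and ?F = "{f \<in> E. snd f = j}" and ?G = "{g \<in> E. fst g = i}"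
  have s: "0 \<le> ?s e" if "e \<in> E" for e using weighted_digraph_pos[OF wd that] by simp
  have entry_bound: "\<bar>?s g * hashimoto_pow E w k g f * ?s f\<bar> \<le> ?s g * B * ?s f" if "g \<in> E" "f \<in> E" for g f
    using s[OF that(1)] s[OF that(2)] bound[OF that]
    by (simp add: abs_mult mult_mono)
  have "\<bar>nb_matrix E w (Suc k) $ i $ j\<bar>
      \<le> (\<Sum>f\<in>?F. \<Sum>g\<in>?G. \<bar>?s g * hashimoto_pow E w k g f * ?s f\<bar>)"
    unfolding nb_matrix_Suc_eq_hashimoto_pow[OF wd]
    by (intro order_trans[OF sum_abs] sum_mono sum_abs)
  also have "\<dots> \<le> (\<Sum>f\<in>?F. \<Sum>g\<in>?G. ?s g * B * ?s f)"
    by (intro sum_mono entry_bound) auto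
  also have "\<dots> \<le> (\<Sum>f\<in>?F. \<Sum>g\<in>E. ?s g * B * ?s f)"
    using s \<open>0 \<le> B\<close> by (intro sum_mono sum_mono2 mult_nonneg_nonneg) auto
  also have "\<dots> \<le> (\<Sum>f\<in>E. \<Sum>g\<in>E. ?s g * B * ?s f)"
    using s \<open>0 \<le> B\<close> by (intro sum_mono2 sum_nonneg mult_nonneg_nonneg) auto
  also have "\<dots> = (\<Sum>e\<in>E. ?s e)\<^sup>2 * B"
    by (simp add: power2_eq_square sum_distrib_left sum_distrib_right mult_ac)
  finally show ?thesis .
qed

lemma nb_matrix_Suc_entry_ge:
  fixes E :: "('v::finite \<times> 'v) set"
  assumes wd: "weighted_digraph E w" and "g \<in> E" and "f \<in> E"
  shows "sqrt (w g) * hashimoto_pow E w k g f * sqrt (w f) \<le> nb_matrix E w (Suc k) $ fst g $ snd f"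
proof -
  let ?T = "\<lambda>g f. sqrt (w g) * hashimoto_pow E w k g f * sqrt (w f)"
  have T: "0 \<le> ?T g' f'" if "g' \<in> E" "f' \<in> E" for g' f'
    using weighted_digraph_pos[OF wd that(1)] weighted_digraph_pos[OF wd that(2)]
      hashimoto_pow_nonneg[OF wd that(2)]
    by (intro mult_nonneg_nonneg) auto
  have "?T g f \<le> (\<Sum>g'\<in>{g' \<in> E. fst g' = fst g}. ?T g' f)"
    using assms T by (intro member_le_sum) auto
  also have "\<dots> \<le> (\<Sum>f'\<in>{f' \<in> E. snd f' = snd f}. \<Sum>g'\<in>{g' \<in> E. fst g' = fst g}. ?T g' f')"
    by (rule member_le_sum[where f = "\<lambda>f'. \<Sum>g'\<in>{g' \<in> E. fst g' = fst g}. ?T g' f'"])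
      (use assms T in \<open>auto intro: sum_nonneg\<close>)
  finally show ?thesis by (simp add: nb_matrix_Suc_eq_hashimoto_pow[OF wd])
qed

lemma norm_nb_matrix_upper_bound:
  fixes E :: "('v::finite \<times> 'v) set"
  assumes wd: "weighted_digraph E w" and r: "spec_rad (hashimoto_mat E w) < r"
  shows "\<exists>D>0. \<forall>n\<ge>1. norm (nb_matrix E w n) \<le> D * r ^ n"
proof -
  have r0: "0 < r" using spec_rad_nonneg[OF hashimoto_mat_carrier] r by (rule le_less_trans)
  obtain C where C0: "0 \<le> C" and C: "\<And>k g f. g \<in> E \<Longrightarrow> f \<in> E \<Longrightarrow> \<bar>hashimoto_pow E w k g f\<bar> \<le> C * r ^ k"
    using hashimoto_pow_upper_bound[OF finite r] by blast
  define S where "S = (\<Sum>e\<in>E. sqrt (w e))\<^sup>2"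
  define D where "D = real (CARD('v) * CARD('v)) * S * C / r + 1"
  have "0 \<le> real (CARD('v) * CARD('v)) * S * C / r"
    using C0 r0 by (intro divide_nonneg_pos mult_nonneg_nonneg) (auto simp: S_def)
  then have "0 < D" by (simp add: D_def)
  moreover have "norm (nb_matrix E w n) \<le> D * r ^ n" if "n \<ge> 1" for n
  proof -
    obtain k where n: "n = Suc k" using \<open>n \<ge> 1\<close> by (cases n) auto
    have entry: "\<bar>nb_matrix E w (Suc k) $ i $ j\<bar> \<le> S * (C * r ^ k)" for i j
      unfolding S_def using C0 r0 by (intro abs_nb_matrix_Suc_le[OF wd] C) auto
    have "norm (nb_matrix E w n) \<le> (\<Sum>i\<in>(UNIV :: 'v set). \<Sum>j\<in>(UNIV :: 'v set). S * (C * r ^ k))"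
      unfolding n by (rule order_trans[OF norm_le_sum_abs_entries]) (intro sum_mono entry)
    also have "\<dots> = (real (CARD('v) * CARD('v)) * S * C / r) * r ^ n"
      using r0 by (simp add: n)
    also have "\<dots> \<le> D * r ^ n" using r0 by (simp add: D_def distrib_right)
    finally show ?thesis .
  qed
  ultimately show ?thesis by blast
qed

lemma norm_nb_matrix_lower_bound:
  fixes E :: "('v::finite \<times> 'v) set"
  assumes wd: "weighted_digraph E w" and \<rho>: "0 < spec_rad (hashimoto_mat E w)"
  shows "\<exists>c>0. \<forall>n\<ge>1. c * spec_rad (hashimoto_mat E w) ^ n \<le> norm (nb_matrix E w n)"
proof -
  let ?\<rho> = "spec_rad (hashimoto_mat E w)"
  have "E \<noteq> {}" using \<rho> by (auto simp: spec_rad_def hashimoto_mat_def)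
  define m where "m = Min ((\<lambda>e. sqrt (w e)) ` E)"
  have m0: "0 < m"
    unfolding m_def using \<open>E \<noteq> {}\<close> weighted_digraph_pos[OF wd] by (subst Min_gr_iff) auto
  have m_le: "m \<le> sqrt (w e)" if "e \<in> E" for e
    unfolding m_def using that by (intro Min_le) auto
  define c where "c = m\<^sup>2 / (card E * ?\<rho>)"
  have "0 < c" using m0 \<rho> \<open>E \<noteq> {}\<close> by (simp add: c_def card_gt_0_iff)
  moreover have "c * ?\<rho> ^ n \<le> norm (nb_matrix E w n)" if "n \<ge> 1" for n
  proof -
    obtain k where n: "n = Suc k" using \<open>n \<ge> 1\<close> by (cases n) auto
    obtain g f where g: "g \<in> E" and f: "f \<in> E"
      and grow: "?\<rho> ^ k \<le> card E * \<bar>hashimoto_pow E w k g f\<bar>"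
      using hashimoto_pow_lower_bound[OF finite \<open>E \<noteq> {}\<close>] by blast
    have V: "0 \<le> hashimoto_pow E w k g f" by (rule hashimoto_pow_nonneg[OF wd f])
    have "c * ?\<rho> ^ n = m\<^sup>2 * (?\<rho> ^ k / card E)"
      using \<rho> by (simp add: c_def n power2_eq_square)
    also have "\<dots> \<le> m\<^sup>2 * hashimoto_pow E w k g f"
      using grow V \<open>E \<noteq> {}\<close> by (intro mult_left_mono) (auto simp: divide_le_eq card_gt_0_iff mult.commute)
    also have "\<dots> \<le> sqrt (w g) * hashimoto_pow E w k g f * sqrt (w f)"
    proof -
      have "m * m \<le> sqrt (w g) * sqrt (w f)"
        using m_le[OF g] m_le[OF f] m0 weighted_digraph_pos[OF wd g] by (intro mult_mono) auto
      from mult_right_mono[OF this V] show ?thesis by (simp add: power2_eq_square mult_ac)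
    qed
    also have "\<dots> \<le> nb_matrix E w (Suc k) $ fst g $ snd f"
      by (rule nb_matrix_Suc_entry_ge[OF wd g f])
    also have "\<dots> \<le> norm (nb_matrix E w n)"
      unfolding n using abs_entry_le_norm by (rule abs_le_D1)
    finally show ?thesis .
  qed
  ultimately show ?thesis by blast
qed

theorem theorem5p2:
  fixes E :: "('v::finite \<times> 'v) set" and w :: "'v \<times> 'v \<Rightarrow> real"
  assumes "weighted_digraph E w"
  shows "conv_radius (nb_matrix E w) =
           (if spec_rad (hashimoto_mat E w) = 0 then \<infinity>
            else ereal (1 / spec_rad (hashimoto_mat E w)))"
proof -
  have "conv_radius (nb_matrix E w) = inverse (ereal (spec_rad (hashimoto_mat E w)))"
    by (rule conv_radius_eq_inverse_of_growth[OF spec_rad_nonneg[OF hashimoto_mat_carrier]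
          norm_nb_matrix_upper_bound[OF assms] norm_nb_matrix_lower_bound[OF assms]])
  then show ?thesis by (simp add: divide_inverse)
qed

end
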